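(* Let $K$ be a set of $m$ knapsacks with capacities $S_i$, $i\in K$, and let $J_S'$ be a set of items each of which is small with respect to every knapsack of $K$, i.e., $s_j<\varepsilon S_i$ for all $j\in J_S'$ and $i\in K$. Let $J_B'$ be a set of items together with a feasible integral packing of $J_B'$ into the knapsacks of $K$ such that the total remaining free capacity in these $m$ knapsacks is at least $s(J_S')=\sum_{j\in J_S'}s_j$. Then the following procedure feasibly packs all items of $J_B'\cup J_S'$ into the $m$ knapsacks of $K$ plus $\varepsilon m$ additional knapsacks, each of which has capacity $\min_{i\in K}S_i$: keep the packing of $J_B'$; consider the items of $J_S'$ in an arbitrary order and the knapsacks of $K$ in an arbitrary order, with the first knapsack opened; if the current small item fits into the remaining capacity of the currently open knapsack, place it there; otherwise place it into the next free slot of the additional knapsacks, close the current knapsack and open the next one.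
   Context: Throughout, $\varepsilon>0$ with $\frac1\varepsilon\in\mathbb{N}$ and $\varepsilon m\in\mathbb{N}$. A packing is feasible if every item is placed in at most one knapsack and the total size of items in each knapsack does not exceed its capacity. *)

theory Defs
  imports Main "HOL.Real"
begin

datatype knap = Orig nat | Extra nat

text \<open>A (feasible) packing of the item set J with sizes s into the knapsack set B with
capacities cap, given by an assignment P (so every item is in at most one knapsack):
every item is packed into some knapsack of B and no capacity is exceeded.\<close>
definition feasible_packing ::
  "'a set \<Rightarrow> ('a \<Rightarrow> real) \<Rightarrow> 'b set \<Rightarrow> ('b \<Rightarrow> real) \<Rightarrow> ('a \<Rightarrow> 'b) \<Rightarrow> bool" where
  "feasible_packing J s B cap P \<longleftrightarrow>
     (\<forall>j\<in>J. P j \<in> B) \<and> (\<forall>b\<in>B. (\<Sum>j\<in>{j\<in>J. P j = b}. s j) \<le> cap b)"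

definition residual :: "(nat \<Rightarrow> real) \<Rightarrow> 'a set \<Rightarrow> ('a \<Rightarrow> real) \<Rightarrow> ('a \<Rightarrow> nat) \<Rightarrow> nat \<Rightarrow> real" where
  "residual S JB s pB i = S i - (\<Sum>j\<in>{j\<in>JB. pB j = i}. s j)"

text \<open>State: index i of the currently open knapsack, its remaining
capacity r, and the number t of items already placed into additional knapsacks.
Each additional knapsack has L slots; the t-th overflow item goes to additional knapsack
\<open>t div L\<close>. R gives the initial remaining capacity of each original knapsack.\<close>
fun greedy :: "('a \<Rightarrow> real) \<Rightarrow> (nat \<Rightarrow> real) \<Rightarrow> nat \<Rightarrow> nat \<Rightarrow> real \<Rightarrow> nat \<Rightarrow> 'a list \<Rightarrow> ('a \<times> knap) list" where
  "greedy s R L i r t [] = []"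
| "greedy s R L i r t (j # js) =
     (if s j \<le> r then (j, Orig i) # greedy s R L i (r - s j) t js
      else (j, Extra (t div L)) # greedy s R L (Suc i) (R (Suc i)) (Suc t) js)"

definition greedy_packing ::
  "real \<Rightarrow> (nat \<Rightarrow> real) \<Rightarrow> 'a set \<Rightarrow> ('a \<Rightarrow> real) \<Rightarrow> ('a \<Rightarrow> nat) \<Rightarrow> 'a list \<Rightarrow> 'a \<Rightarrow> knap" where
  "greedy_packing \<epsilon> S JB s pB js j =
     (let R = residual S JB s pB; L = nat \<lfloor>1 / \<epsilon>\<rfloor> in
      case map_of (greedy s R L 0 (R 0) 0 js) j of Some k \<Rightarrow> k | None \<Rightarrow> Orig (pB j))"

definition knap_cap :: "(nat \<Rightarrow> real) \<Rightarrow> nat \<Rightarrow> knap \<Rightarrow> real" where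
  "knap_cap S m k = (case k of Orig i \<Rightarrow> S i | Extra _ \<Rightarrow> Min (S ` {..<m}))"

definition all_knaps :: "nat \<Rightarrow> nat \<Rightarrow> knap set" where
  "all_knaps m e = Orig ` {..<m} \<union> Extra ` {..<e}"

end

(* Every original knapsack only receives small items that fit into its residual capacity,
   so the packing of the big items stays feasible there.  An item overflows only when it does
   not fit into the currently open knapsack, so after c overflows the items processed so far
   exceed the free capacity of the c knapsacks opened; as the total free capacity is at least
   s(J_S'), fewer than m = (1/eps) (eps m) items overflow.  The q-th overflow item goes to
   additional knapsack q div (1/eps), hence eps m additional knapsacks suffice, and each of them
   receives at most 1/eps items, each smaller than eps min S_i. *)
theory Submission
  imports Defs
begin

lemma of_nat_nat_floor_Nats: "x \<in> \<nat> \<Longrightarrow> real (nat \<lfloor>x\<rfloor>) = x"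
  by (auto elim: Nats_cases)

lemma nat_floor_unit_fraction:
  assumes "0 < \<epsilon>" and "1 / \<epsilon> \<in> \<nat>" and "\<epsilon> * real m \<in> \<nat>"
  shows "\<epsilon> * real (nat \<lfloor>1 / \<epsilon>\<rfloor>) = 1" and "m = nat \<lfloor>1 / \<epsilon>\<rfloor> * nat \<lfloor>\<epsilon> * real m\<rfloor>"
proof -
  have L: "real (nat \<lfloor>1 / \<epsilon>\<rfloor>) = 1 / \<epsilon>"
    by (rule of_nat_nat_floor_Nats [OF assms(2)])
  have "\<epsilon> * (1 / \<epsilon>) = 1"
    using assms(1) by simp
  then show eps_L: "\<epsilon> * real (nat \<lfloor>1 / \<epsilon>\<rfloor>) = 1"
    by (simp only: L)
  have "real (nat \<lfloor>1 / \<epsilon>\<rfloor> * nat \<lfloor>\<epsilon> * real m\<rfloor>) = (\<epsilon> * real (nat \<lfloor>1 / \<epsilon>\<rfloor>)) * real m"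
    using of_nat_nat_floor_Nats [OF assms(3)] by (simp add: ac_simps)
  then show "m = nat \<lfloor>1 / \<epsilon>\<rfloor> * nat \<lfloor>\<epsilon> * real m\<rfloor>"
    using eps_L by (metis mult_1 of_nat_eq_iff)
qed

lemma card_div_eq:
  assumes "0 < L"
  shows "card {q::nat. q div L = e} = L"
proof -
  have "q div L = e \<longleftrightarrow> q \<in> {L * e..<L * e + L}" for q
  proof
    assume "q div L = e"
    then have "q = L * e + q mod L" by (metis div_mult_mod_eq mult.commute)
    moreover have "q mod L < L" using assms by simp
    ultimately show "q \<in> {L * e..<L * e + L}"
      unfolding atLeastLessThan_iff by linarith
  qed (auto intro: div_nat_eqI)
  then have "{q. q div L = e} = {L * e..<L * e + L}" by blast
  then show ?thesis by simp
qed

lemma feasible_packing_cong: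
  assumes "\<And>j. j \<in> J \<Longrightarrow> P j = Q j"
  shows "feasible_packing J s B cap P \<longleftrightarrow> feasible_packing J s B cap Q"
proof -
  have "{j \<in> J. P j = b} = {j \<in> J. Q j = b}" for b
    using assms by auto
  then show ?thesis
    unfolding feasible_packing_def using assms by simp
qed

lemma feasible_packing_union:
  assumes "feasible_packing A s B cap\<^sub>A P" and "feasible_packing C s B cap\<^sub>C P"
    and "finite A" and "finite C" and "A \<inter> C = {}"
    and "\<And>b. b \<in> B \<Longrightarrow> cap\<^sub>A b + cap\<^sub>C b \<le> cap b"
  shows "feasible_packing (A \<union> C) s B cap P"
  unfolding feasible_packing_def
proof (intro conjI ballI)
  fix j assume "j \<in> A \<union> C"
  then show "P j \<in> B"
    using assms(1,2) unfolding feasible_packing_def by blast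
next
  fix b assume b: "b \<in> B"
  have "{j \<in> A \<union> C. P j = b} = {j \<in> A. P j = b} \<union> {j \<in> C. P j = b}"
    by auto
  then have "(\<Sum>j\<in>{j \<in> A \<union> C. P j = b}. s j)
      = (\<Sum>j\<in>{j \<in> A. P j = b}. s j) + (\<Sum>j\<in>{j \<in> C. P j = b}. s j)"
    using assms(3-5) by (simp add: sum.union_disjoint disjoint_iff)
  also have "\<dots> \<le> cap\<^sub>A b + cap\<^sub>C b"
    using assms(1,2) b unfolding feasible_packing_def by (blast intro: add_mono)
  also have "\<dots> \<le> cap b"
    using assms(6) b .
  finally show "(\<Sum>j\<in>{j \<in> A \<union> C. P j = b}. s j) \<le> cap b" .
qed

lemma feasible_packing_Un_if:
  assumes "feasible_packing A s B cap\<^sub>A P" and "feasible_packing C s B cap\<^sub>C Q"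
    and "finite A" and "finite C" and "A \<inter> C = {}"
    and "\<And>b. b \<in> B \<Longrightarrow> cap\<^sub>A b + cap\<^sub>C b \<le> cap b"
  shows "feasible_packing (A \<union> C) s B cap (\<lambda>j. if j \<in> A then P j else Q j)"
proof (rule feasible_packing_union [OF _ _ assms(3-6)])
  show "feasible_packing A s B cap\<^sub>A (\<lambda>j. if j \<in> A then P j else Q j)"
    using assms(1) by (rule feasible_packing_cong [THEN iffD1, rotated]) simp
  show "feasible_packing C s B cap\<^sub>C (\<lambda>j. if j \<in> A then P j else Q j)"
    using assms(2) by (rule feasible_packing_cong [THEN iffD1, rotated]) (use assms(5) in auto)
qed

lemma feasible_packing_residual:
  assumes "feasible_packing J s {..<m} S p"
  shows "feasible_packing J s (all_knaps m e)
           (\<lambda>b. case b of Orig k \<Rightarrow> S k - residual S J s p k | Extra _ \<Rightarrow> 0) (\<lambda>j. Orig (p j))"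
  using assms unfolding feasible_packing_def all_knaps_def residual_def
  by (auto split: knap.split)

fun is_extra :: "knap \<Rightarrow> bool" where
  "is_extra (Orig _) = False"
| "is_extra (Extra _) = True"

definition overflows :: "('a \<times> knap) list \<Rightarrow> nat" where
  "overflows G = length (filter is_extra (map snd G))"

lemma overflows_Nil [simp]: "overflows [] = 0"
  by (simp add: overflows_def)

lemma overflows_Cons [simp]:
  "overflows (p # G) = (if is_extra (snd p) then Suc (overflows G) else overflows G)"
  by (simp add: overflows_def)

definition load :: "('a \<Rightarrow> real) \<Rightarrow> ('a \<times> 'b) list \<Rightarrow> 'b \<Rightarrow> real" where
  "load s G b = (\<Sum>p\<leftarrow>filter (\<lambda>p. snd p = b) G. s (fst p))"

lemma load_Nil [simp]: "load s [] b = 0"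
  by (simp add: load_def)

lemma load_Cons [simp]:
  "load s (p # G) b = (if snd p = b then s (fst p) + load s G b else load s G b)"
  by (simp add: load_def)

lemma load_le_length_mult:
  assumes "\<And>p. p \<in> set G \<Longrightarrow> snd p = b \<Longrightarrow> s (fst p) \<le> a"
  shows "load s G b \<le> real (length (filter (\<lambda>p. snd p = b) G)) * a"
proof -
  have "load s G b \<le> (\<Sum>p\<leftarrow>filter (\<lambda>p. snd p = b) G. a)"
    unfolding load_def by (rule sum_list_mono) (use assms in auto)
  then show ?thesis by (simp add: sum_list_triv)
qed

lemma sum_map_of_fiber_eq_load:
  assumes "distinct (map fst G)"
  shows "(\<Sum>j\<in>{j \<in> fst ` set G. the (map_of G j) = b}. s j) = load s G b"
proof -
  have "{j \<in> fst ` set G. the (map_of G j) = b} = set (map fst (filter (\<lambda>p. snd p = b) G))"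
    using assms by (force simp: map_of_eq_Some_iff)
  moreover have "distinct (map fst (filter (\<lambda>p. snd p = b) G))"
    using assms by (simp add: distinct_map_filter)
  then have "(\<Sum>j\<leftarrow>map fst (filter (\<lambda>p. snd p = b) G). s j)
      = sum s (set (map fst (filter (\<lambda>p. snd p = b) G)))"
    by (rule sum_list_distinct_conv_sum_set)
  ultimately show ?thesis
    by (simp add: load_def o_def)
qed

lemma the_map_of_mem:
  assumes "x \<in> fst ` set xs"
  shows "(x, the (map_of xs x)) \<in> set xs"
proof -
  have "map_of xs x \<noteq> None"
    using assms by (simp add: map_of_eq_None_iff)
  then show ?thesis
    by (auto dest: map_of_SomeD)
qed

lemma map_fst_greedy: "map fst (greedy s R L i r t js) = js"
  by (induction js arbitrary: i r t) auto

lemma filter_is_extra_greedy: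
  "filter is_extra (map snd (greedy s R L i r t js)) =
     map (\<lambda>q. Extra (q div L)) [t..<t + overflows (greedy s R L i r t js)]"
  by (induction js arbitrary: i r t) (auto simp: upt_conv_Cons simp del: upt_Suc)

lemma greedy_Orig_bounds:
  "(j, Orig k) \<in> set (greedy s R L i r t js) \<Longrightarrow>
     i \<le> k \<and> k \<le> i + overflows (greedy s R L i r t js)"
proof (induction js arbitrary: i r t)
  case (Cons a js)
  show ?case
  proof (cases "s a \<le> r")
    case True
    then show ?thesis using Cons by auto
  next
    case False
    then have "(j, Orig k) \<in> set (greedy s R L (Suc i) (R (Suc i)) (Suc t) js)"
      using Cons.prems by simp
    then show ?thesis using Cons.IH False by fastforce
  qed
qed simp

lemma greedy_Extra_bounds:
  assumes "(j, Extra e) \<in> set (greedy s R L i r t js)"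
  shows "\<exists>q<t + overflows (greedy s R L i r t js). e = q div L"
proof -
  have "Extra e \<in> set (filter is_extra (map snd (greedy s R L i r t js)))"
    using assms by force
  then show ?thesis
    unfolding filter_is_extra_greedy by auto
qed

lemma length_filter_Extra_greedy:
  assumes "0 < L"
  shows "length (filter (\<lambda>p. snd p = Extra e) (greedy s R L i r t js)) \<le> L"
proof -
  let ?G = "greedy s R L i r t js"
  let ?qs = "[t..<t + overflows ?G]"
  have "filter (\<lambda>k. k = Extra e) (map snd ?G)
      = filter (\<lambda>k. k = Extra e) (filter is_extra (map snd ?G))"
    unfolding filter_filter by (rule filter_cong) auto
  then have "length (filter (\<lambda>p. snd p = Extra e) ?G) = length (filter (\<lambda>q. q div L = e) ?qs)"
    unfolding filter_is_extra_greedy by (simp add: filter_map o_def) (metis length_map)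
  also have "\<dots> = card ({q. q div L = e} \<inter> set ?qs)"
    by (rule distinct_length_filter) simp
  also have "\<dots> \<le> card {q. q div L = e}"
    using card_div_eq [OF assms] assms by (intro card_mono card_ge_0_finite) auto
  finally show ?thesis
    using card_div_eq [OF assms] by simp
qed

lemma load_greedy_Orig_le:
  assumes "i \<le> k"
  shows "load s (greedy s R L i r t js) (Orig k) \<le> max 0 (if k = i then r else R k)"
  using assms
proof (induction js arbitrary: i r t)
  case Nil
  then show ?case by simp
next
  case (Cons j js)
  show ?case
  proof (cases "s j \<le> r")
    case True
    then show ?thesis using Cons.IH [of i "r - s j" t] Cons.prems by (auto simp: max_def)
  next
    case overflow: False
    show ?thesis
    proof (cases "k = i")
      case True
      have "\<forall>p\<in>set (greedy s R L (Suc i) (R (Suc i)) (Suc t) js). snd p \<noteq> Orig k"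
        using greedy_Orig_bounds [of _ k s R L "Suc i"] True by (metis Suc_n_not_le_n prod.collapse)
      then have "load s (greedy s R L (Suc i) (R (Suc i)) (Suc t) js) (Orig k) = 0"
        by (simp add: load_def filter_False)
      then show ?thesis using overflow by simp
    next
      case False
      then show ?thesis
        using Cons.IH [of "Suc i" "R (Suc i)" "Suc t"] Cons.prems overflow by (auto split: if_splits)
    qed
  qed
qed

lemma greedy_bin_in_all_knaps:
  assumes "(j, b) \<in> set (greedy s R L 0 r 0 js)"
    and "overflows (greedy s R L 0 r 0 js) < m" and "m \<le> L * K"
  shows "b \<in> all_knaps m K"
proof (cases b)
  case (Orig k)
  then show ?thesis
    using greedy_Orig_bounds [of j k] assms unfolding all_knaps_def by fastforce
next
  case (Extra e)
  then obtain q where "q < overflows (greedy s R L 0 r 0 js)" and "e = q div L"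
    using greedy_Extra_bounds assms(1) by fastforce
  then have "e < K"
    using assms(2,3) by (simp add: less_mult_imp_div_less mult.commute)
  then show ?thesis
    using Extra unfolding all_knaps_def by auto
qed

lemma load_greedy_Extra_le:
  assumes "0 < L" and "0 \<le> a" and "\<forall>j\<in>set js. s j \<le> a"
  shows "load s (greedy s R L i r t js) (Extra e) \<le> real L * a"
proof -
  let ?G = "greedy s R L i r t js"
  have "load s ?G (Extra e) \<le> real (length (filter (\<lambda>p. snd p = Extra e) ?G)) * a"
  proof (rule load_le_length_mult)
    fix p assume "p \<in> set ?G"
    then have "fst p \<in> set (map fst ?G)" by simp
    then show "s (fst p) \<le> a"
      using assms(3) unfolding map_fst_greedy by blast
  qed
  also have "\<dots> \<le> real L * a"
    using length_filter_Extra_greedy [OF assms(1)] assms(2) by (intro mult_right_mono) simp_all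
  finally show ?thesis .
qed

lemma greedy_capacity_less_sum:
  assumes "\<forall>j\<in>set js. 0 \<le> s j" and "0 < c" and "c \<le> overflows (greedy s R L i r t js)"
  shows "r + (\<Sum>k\<in>{Suc i..<i + c}. R k) < sum_list (map s js)"
  using assms
proof (induction js arbitrary: i r t c)
  case (Cons j js)
  have rest_nonneg: "0 \<le> sum_list (map s js)"
    using Cons.prems(1) by (intro sum_list_nonneg) auto
  show ?case
  proof (cases "s j \<le> r")
    case True
    then show ?thesis
      using Cons.IH [where i = i and r = "r - s j" and t = t and c = c] Cons.prems by auto
  next
    case overflow: False
    show ?thesis
    proof (cases "c = 1")
      case True
      then show ?thesis using overflow rest_nonneg by simp
    next
      case False
      have "R (Suc i) + (\<Sum>k\<in>{Suc (Suc i)..<Suc i + (c - 1)}. R k) < sum_list (map s js)"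
        using Cons.IH [where i = "Suc i" and r = "R (Suc i)" and t = "Suc t" and c = "c - 1"]
          Cons.prems overflow False by auto
      moreover have "(\<Sum>k\<in>{Suc i..<i + c}. R k)
          = R (Suc i) + (\<Sum>k\<in>{Suc (Suc i)..<Suc i + (c - 1)}. R k)"
        using False Cons.prems(2) by (subst sum.atLeast_Suc_lessThan) auto
      ultimately show ?thesis using overflow by simp
    qed
  qed
qed simp

lemma overflows_greedy_less:
  assumes "0 < m" and "\<forall>j\<in>set js. 0 \<le> s j" and "sum_list (map s js) \<le> (\<Sum>k<m. R k)"
  shows "overflows (greedy s R L 0 (R 0) 0 js) < m"
proof (rule ccontr)
  assume "\<not> ?thesis"
  then have "R 0 + (\<Sum>k\<in>{Suc 0..<m}. R k) < sum_list (map s js)"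
    using greedy_capacity_less_sum [of js s m R L 0 "R 0" 0] assms(1,2) by simp
  also have "R 0 + (\<Sum>k\<in>{Suc 0..<m}. R k) = (\<Sum>k<m. R k)"
    using assms(1) by (simp add: lessThan_atLeast0 sum.atLeast_Suc_lessThan)
  finally show False using assms(3) by simp
qed

lemma feasible_packing_greedy:
  fixes s :: "'a \<Rightarrow> real" and R :: "nat \<Rightarrow> real" and L :: nat and js :: "'a list"
  defines "G \<equiv> greedy s R L 0 (R 0) 0 js"
  assumes eps_L: "\<epsilon> * real L = 1" and "distinct js" and "overflows G < m" and "m \<le> L * K"
    and R_nonneg: "\<And>k. k < m \<Longrightarrow> 0 \<le> R k" and "0 \<le> C" and small: "\<forall>j\<in>set js. s j \<le> \<epsilon> * C"
  shows "feasible_packing (set js) s (all_knaps m K)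
           (\<lambda>b. case b of Orig k \<Rightarrow> R k | Extra _ \<Rightarrow> C) (\<lambda>j. the (map_of G j))"
proof -
  have "0 < L"
    using eps_L by (cases L) auto
  have "0 < \<epsilon>"
    using eps_L by (smt (verit) mult_nonpos_nonneg of_nat_0_le_iff)
  have fst_G: "fst ` set G = set js"
    unfolding G_def by (metis map_fst_greedy set_map)
  have distinct_G: "distinct (map fst G)"
    unfolding G_def using \<open>distinct js\<close> by (simp add: map_fst_greedy)
  have load_eq: "(\<Sum>j\<in>{j \<in> set js. the (map_of G j) = b}. s j) = load s G b" for b
    using sum_map_of_fiber_eq_load [OF distinct_G, where b = b and s = s] unfolding fst_G .
  have "the (map_of G j) \<in> all_knaps m K" if "j \<in> set js" for j
  proof -
    have "(j, the (map_of G j)) \<in> set G"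
      by (rule the_map_of_mem) (simp add: fst_G that)
    then show ?thesis
      using assms(4,5) unfolding G_def by (rule greedy_bin_in_all_knaps)
  qed
  moreover have "load s G b \<le> (case b of Orig k \<Rightarrow> R k | Extra _ \<Rightarrow> C)" if "b \<in> all_knaps m K" for b
  proof (cases b)
    case (Orig k)
    then have "k < m" using that unfolding all_knaps_def by auto
    then show ?thesis
      using load_greedy_Orig_le [of 0 k s R L "R 0" 0 js] R_nonneg [of k] Orig
      unfolding G_def by (auto split: if_splits)
  next
    case (Extra e)
    have "load s G b \<le> real L * (\<epsilon> * C)"
      using load_greedy_Extra_le [OF \<open>0 < L\<close> _ small] \<open>0 < \<epsilon>\<close> \<open>0 \<le> C\<close> Extra
      unfolding G_def by simp
    also have "\<dots> = (\<epsilon> * real L) * C"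
      by (simp only: ac_simps)
    finally show ?thesis using Extra eps_L by simp
  qed
  ultimately show ?thesis
    unfolding feasible_packing_def load_eq by simp
qed

lemma greedy_packing_eq:
  "greedy_packing \<epsilon> S JB s pB js =
     (\<lambda>j. if j \<in> set js
      then the (map_of (greedy s (residual S JB s pB) (nat \<lfloor>1 / \<epsilon>\<rfloor>) 0 (residual S JB s pB 0) 0 js) j)
      else Orig (pB j))"
proof
  fix j
  let ?G = "greedy s (residual S JB s pB) (nat \<lfloor>1 / \<epsilon>\<rfloor>) 0 (residual S JB s pB 0) 0 js"
  have "fst ` set ?G = set js"
    by (metis map_fst_greedy set_map)
  then have "map_of ?G j = None \<longleftrightarrow> j \<notin> set js"
    by (simp add: map_of_eq_None_iff)
  then show "greedy_packing \<epsilon> S JB s pB js j =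
      (if j \<in> set js then the (map_of ?G j) else Orig (pB j))"
    unfolding greedy_packing_def Let_def by (auto split: option.split)
qed

theorem lemmaC5:
  fixes \<epsilon> :: real and m :: nat and S :: "nat \<Rightarrow> real" and s :: "'a \<Rightarrow> real"
    and JB :: "'a set" and pB :: "'a \<Rightarrow> nat" and js :: "'a list"
  assumes eps_pos: "\<epsilon> > 0"
    and eps_inv: "1 / \<epsilon> \<in> \<nat>"
    and eps_m: "\<epsilon> * real m \<in> \<nat>"
    and m_pos: "m > 0"
    and cap_pos: "\<forall>i<m. S i > 0"
    and size_pos: "\<forall>j \<in> JB \<union> set js. s j > 0"
    and finJB: "finite JB"
    and dist: "distinct js"
    and disj: "JB \<inter> set js = {}"
    and small: "\<forall>j\<in>set js. \<forall>i<m. s j < \<epsilon> * S i"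
    and big_packed: "feasible_packing JB s {..<m} S pB"
    and free: "(\<Sum>i<m. residual S JB s pB i) \<ge> (\<Sum>j\<in>set js. s j)"
  shows "feasible_packing (JB \<union> set js) s (all_knaps m (nat \<lfloor>\<epsilon> * real m\<rfloor>))
           (knap_cap S m) (greedy_packing \<epsilon> S JB s pB js)"
proof -
  define R where "R = residual S JB s pB"
  define L where "L = nat \<lfloor>1 / \<epsilon>\<rfloor>"
  define K where "K = nat \<lfloor>\<epsilon> * real m\<rfloor>"
  define G where "G = greedy s R L 0 (R 0) 0 js"
  have "Min (S ` {..<m}) \<in> S ` {..<m}"
    using m_pos by (intro Min_in) auto
  then obtain i where "i < m" and Smin: "Min (S ` {..<m}) = S i"
    by blast
  have R_nonneg: "0 \<le> R k" if "k < m" for k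
    using big_packed that unfolding feasible_packing_def R_def residual_def by auto
  have "overflows G < m"
    using overflows_greedy_less [OF m_pos, of js s R L] size_pos free dist
    unfolding G_def R_def by (simp add: less_imp_le sum_list_distinct_conv_sum_set)
  then have "feasible_packing (set js) s (all_knaps m K)
      (\<lambda>b. case b of Orig k \<Rightarrow> R k | Extra _ \<Rightarrow> Min (S ` {..<m})) (\<lambda>j. the (map_of G j))"
    using nat_floor_unit_fraction [OF eps_pos eps_inv eps_m] dist R_nonneg cap_pos small \<open>i < m\<close>
    unfolding Smin L_def K_def G_def by (intro feasible_packing_greedy) (auto simp: less_imp_le)
  moreover have "feasible_packing JB s (all_knaps m K)
      (\<lambda>b. case b of Orig k \<Rightarrow> S k - R k | Extra _ \<Rightarrow> 0) (\<lambda>j. Orig (pB j))"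
    unfolding R_def by (rule feasible_packing_residual [OF big_packed])
  ultimately have "feasible_packing (set js \<union> JB) s (all_knaps m K) (knap_cap S m)
      (\<lambda>j. if j \<in> set js then the (map_of G j) else Orig (pB j))"
    using finJB disj
    by (intro feasible_packing_Un_if) (auto simp: knap_cap_def split: knap.split)
  then show ?thesis
    unfolding greedy_packing_eq G_def R_def L_def K_def by (simp add: Un_commute)
qed

end
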